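(* Let $V$ be a vector space over a field $\mathbb{K}$ (of arbitrary characteristic, not necessarily finite-dimensional), let $F$ be a bilinear form on $V$, and let $f\in V^*$. For every $p\ge 0$ and every $u\in \mathcal{T}^p(V)$ we have $$ i_f\circ \Lambda_F(u)=\Lambda_F(i_f(u))+(-1)^p\,\Lambda_F(u)\circ i_f $$ as endomorphisms of $\mathcal{T}(V)$.
   Context: $\mathcal{T}(V)=\bigoplus_{p\ge0}\mathcal{T}^p(V)$ is the tensor algebra of $V$ with product $\otimes$, $\mathcal{T}^0(V)=\mathbb{K}$, $\mathcal{T}^1(V)=V$. For $x\in V$, $e_x\in\mathrm{End}(\mathcal{T}(V))$ is $e_x(u)=x\otimes u$. For $f\in V^*$, $i_f$ is the unique linear map $\mathcal{T}(V)\to\mathcal{T}(V)$ with $i_f(1)=0$ and $i_f(x\otimes u)=f(x)u-x\otimes i_f(u)$ for $x\in V$, $u\in\mathcal{T}(V)$; explicitly $i_f(x_1\otimes\cdots\otimes x_p)=\sum_{i=1}^p(-1)^{i-1}f(x_i)\,x_1\otimes\cdots\otimes\widehat{x_i}\otimes\cdots\otimes x_p$. It satisfies $i_f i_g+i_g i_f=0$ for $f,g\in V^*$. For a bilinear form $F$ and $x\in V$, $i_x^F:=i_{f_x}$ where $f_x(y)=F(x,y)$. $\Lambda_F:\mathcal{T}(V)\to\mathrm{End}(\mathcal{T}(V))$ is the unique unital algebra homomorphism with $\Lambda_F(x)=e_x+i_x^F$ for $x\in V$. *)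

theory Defs
  imports "HOL-Library.Poly_Mapping"
begin

text \<open>
  Model: a K-vector space V with basis indexed by the type 'b is the space of finitely supported
  functions 'b =>0 'k. The tensor algebra T(V) is then the free vector space on words
  over the basis, i.e. 'b list =>0 'k; the word [b1,...,bp] represents b1 \<otimes> ... \<otimes> bp,
  and T^p(V) consists of the elements supported on words of length p.
\<close>

type_synonym ('b, 'k) vec = "'b \<Rightarrow>\<^sub>0 'k"
type_synonym ('b, 'k) tens = "'b list \<Rightarrow>\<^sub>0 'k"

definition vscale :: "'k::field \<Rightarrow> ('b, 'k) vec \<Rightarrow> ('b, 'k) vec" where
  "vscale c v = Poly_Mapping.map (\<lambda>a. c * a) v"

definition tscale :: "'k::field \<Rightarrow> ('b, 'k) tens \<Rightarrow> ('b, 'k) tens" where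
  "tscale c u = Poly_Mapping.map (\<lambda>a. c * a) u"

definition lin_form :: "(('b, 'k::field) vec \<Rightarrow> 'k) \<Rightarrow> bool" where
  "lin_form f \<longleftrightarrow> (\<forall>v w. f (v + w) = f v + f w) \<and> (\<forall>c v. f (vscale c v) = c * f v)"

definition bilin_form :: "(('b, 'k::field) vec \<Rightarrow> ('b, 'k) vec \<Rightarrow> 'k) \<Rightarrow> bool" where
  "bilin_form F \<longleftrightarrow> (\<forall>x. lin_form (\<lambda>y. F x y)) \<and> (\<forall>y. lin_form (\<lambda>x. F x y))"

definition tprod :: "('b, 'k::field) tens \<Rightarrow> ('b, 'k) tens \<Rightarrow> ('b, 'k) tens" where
  "tprod u w = (\<Sum>xs\<in>Poly_Mapping.keys u. \<Sum>ys\<in>Poly_Mapping.keys w.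
       Poly_Mapping.single (xs @ ys) (Poly_Mapping.lookup u xs * Poly_Mapping.lookup w ys))"

definition incl :: "('b, 'k::field) vec \<Rightarrow> ('b, 'k) tens" where
  "incl v = (\<Sum>b\<in>Poly_Mapping.keys v. Poly_Mapping.single [b] (Poly_Mapping.lookup v b))"

definition homog :: "nat \<Rightarrow> ('b, 'k::field) tens \<Rightarrow> bool" where
  "homog p u \<longleftrightarrow> (\<forall>xs\<in>Poly_Mapping.keys u. length xs = p)"

definition bvec :: "'b \<Rightarrow> ('b, 'k::field) vec" where
  "bvec b = Poly_Mapping.single b 1"

definition emul :: "('b, 'k::field) vec \<Rightarrow> ('b, 'k) tens \<Rightarrow> ('b, 'k) tens" where
  "emul x u = tprod (incl x) u"

fun iword :: "(('b, 'k::field) vec \<Rightarrow> 'k) \<Rightarrow> 'b list \<Rightarrow> ('b, 'k) tens" where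
  "iword f [] = 0"
| "iword f (b # bs) = tscale (f (bvec b)) (Poly_Mapping.single bs 1)
                      - emul (bvec b) (iword f bs)"

definition contr :: "(('b, 'k::field) vec \<Rightarrow> 'k) \<Rightarrow> ('b, 'k) tens \<Rightarrow> ('b, 'k) tens" where
  "contr f u = (\<Sum>xs\<in>Poly_Mapping.keys u. tscale (Poly_Mapping.lookup u xs) (iword f xs))"

definition contrF :: "(('b, 'k::field) vec \<Rightarrow> ('b, 'k) vec \<Rightarrow> 'k) \<Rightarrow> ('b, 'k) vec
                      \<Rightarrow> ('b, 'k) tens \<Rightarrow> ('b, 'k) tens" where
  "contrF F x = contr (\<lambda>y. F x y)"

definition LamV :: "(('b, 'k::field) vec \<Rightarrow> ('b, 'k) vec \<Rightarrow> 'k) \<Rightarrow> ('b, 'k) vec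
                    \<Rightarrow> ('b, 'k) tens \<Rightarrow> ('b, 'k) tens" where
  "LamV F x = (\<lambda>u. emul x u + contrF F x u)"

text \<open>\<Lambda>_F: the unital algebra homomorphism T(V) \<rightarrow> End(T(V)) extending LamV:
  on a word b1...bp it is \<Lambda>_F(b1) \<circ> ... \<circ> \<Lambda>_F(bp) (identity for the empty word),
  extended linearly.\<close>
definition Lam :: "(('b, 'k::field) vec \<Rightarrow> ('b, 'k) vec \<Rightarrow> 'k) \<Rightarrow> ('b, 'k) tens
                   \<Rightarrow> ('b, 'k) tens \<Rightarrow> ('b, 'k) tens" where
  "Lam F u = (\<lambda>w. \<Sum>xs\<in>Poly_Mapping.keys u.
      tscale (Poly_Mapping.lookup u xs) (foldr (\<lambda>b g. LamV F (bvec b) \<circ> g) xs id w))"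

end

theory Submission
  imports Defs "HOL.Vector_Spaces"
begin

text \<open>
  All maps involved are linear in \<open>u\<close> and in the argument \<open>w\<close>, so it suffices to
  check identities on words. The recursion defining \<open>i\<^sub>f\<close> says
  \<open>i\<^sub>f \<circ> e\<^sub>b = f(b) id - e\<^sub>b \<circ> i\<^sub>f\<close>; together with the anticommutation of contractions
  and \<open>\<Lambda>\<^sub>F(b) = e\<^sub>b + i\<^sup>F\<^sub>b\<close> this gives \<open>i\<^sub>f \<circ> \<Lambda>\<^sub>F(b) = f(b) id - \<Lambda>\<^sub>F(b) \<circ> i\<^sub>f\<close>.
  Since \<open>\<Lambda>\<^sub>F(b \<otimes> v) = \<Lambda>\<^sub>F(b) \<circ> \<Lambda>\<^sub>F(v)\<close>, induction on the length of a word moves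
  \<open>i\<^sub>f\<close> across \<open>\<Lambda>\<^sub>F(b\<^sub>1 \<dots> b\<^sub>p)\<close> one letter at a time, picking up a sign per letter and
  exactly the terms of \<open>\<Lambda>\<^sub>F(i\<^sub>f(b\<^sub>1 \<dots> b\<^sub>p))\<close>.
\<close>

lemma lookup_tscale [simp]: "Poly_Mapping.lookup (tscale c u) xs = c * Poly_Mapping.lookup u xs"
  by (simp add: tscale_def Poly_Mapping.map.rep_eq when_def)

interpretation tens: vector_space "tscale :: 'k::field \<Rightarrow> ('b, 'k) tens \<Rightarrow> ('b, 'k) tens"
  by unfold_locales (auto intro!: poly_mapping_eqI simp: lookup_add algebra_simps)

interpretation tens_pair: vector_space_pair
  "tscale :: 'k::field \<Rightarrow> ('b, 'k) tens \<Rightarrow> ('b, 'k) tens"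
  "tscale :: 'k::field \<Rightarrow> ('b, 'k) tens \<Rightarrow> ('b, 'k) tens" ..

abbreviation tens_linear :: "(('b, 'k::field) tens \<Rightarrow> ('b, 'k) tens) \<Rightarrow> bool" where
  "tens_linear \<equiv> Vector_Spaces.linear tscale tscale"

abbreviation word :: "'b list \<Rightarrow> ('b, 'k::field) tens" where
  "word xs \<equiv> Poly_Mapping.single xs 1"

lemma tscale_word: "tscale c (word xs) = Poly_Mapping.single xs c"
  by (rule poly_mapping_eqI) (simp add: lookup_single when_def)

definition tens_extend :: "('b list \<Rightarrow> ('b, 'k::field) tens) \<Rightarrow> ('b, 'k) tens \<Rightarrow> ('b, 'k) tens" where
  "tens_extend G u = (\<Sum>xs\<in>Poly_Mapping.keys u. tscale (Poly_Mapping.lookup u xs) (G xs))"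

lemma tens_extend_word [simp]: "tens_extend G (word xs) = G xs"
  by (simp add: tens_extend_def)

lemma tens_extend_cong:
  "(\<And>xs. xs \<in> Poly_Mapping.keys u \<Longrightarrow> G xs = H xs) \<Longrightarrow> tens_extend G u = tens_extend H u"
  by (simp add: tens_extend_def)

lemma tens_extend_superset:
  assumes "finite S" "Poly_Mapping.keys u \<subseteq> S"
  shows "tens_extend G u = (\<Sum>xs\<in>S. tscale (Poly_Mapping.lookup u xs) (G xs))"
  unfolding tens_extend_def
  by (rule sum.mono_neutral_left) (use assms in \<open>auto simp: in_keys_iff\<close>)

lemma tens_extend_words: "tens_extend word u = u"
proof (rule poly_mapping_eqI)
  fix ys
  have "Poly_Mapping.lookup (tens_extend word u) ys
      = (\<Sum>xs\<in>Poly_Mapping.keys u. if xs = ys then Poly_Mapping.lookup u xs else 0)"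
    unfolding tens_extend_def
    by (rule trans[OF lookup_sum], rule sum.cong) (simp_all add: lookup_single when_def)
  then show "Poly_Mapping.lookup (tens_extend word u) ys = Poly_Mapping.lookup u ys"
    by (simp add: in_keys_iff)
qed

lemma span_words: "tens.span (range word) = (UNIV :: ('b, 'k::field) tens set)"
proof -
  have "tens_extend word u \<in> tens.span (range word)" for u :: "('b, 'k) tens"
    unfolding tens_extend_def by (intro tens.span_sum tens.span_scale tens.span_base rangeI)
  then show ?thesis
    by (auto simp: tens_extend_words)
qed

lemma tens_linear_compose: "tens_linear T \<Longrightarrow> tens_linear S \<Longrightarrow> tens_linear (T \<circ> S)"
  by (rule Vector_Spaces.linear_compose)

lemma tens_linear_eqI:
  assumes "tens_linear T" "tens_linear S" "\<And>xs. T (word xs) = S (word xs)"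
  shows "T = S"
  using tens_pair.linear_eq_on[OF assms(1,2)] assms(3) span_words by blast

lemma linear_tens_extend:
  fixes G :: "'b list \<Rightarrow> ('b, 'k::field) tens"
  shows "tens_linear (tens_extend G)"
proof (rule linear_iff[THEN iffD2], intro conjI allI)
  fix u v :: "('b, 'k) tens"
  let ?S = "Poly_Mapping.keys u \<union> Poly_Mapping.keys v"
  have "tens_extend G (u + v) = (\<Sum>xs\<in>?S. tscale (Poly_Mapping.lookup (u + v) xs) (G xs))"
    by (rule tens_extend_superset) (auto dest: subsetD[OF keys_add])
  also have "\<dots> = (\<Sum>xs\<in>?S. tscale (Poly_Mapping.lookup u xs) (G xs))
                 + (\<Sum>xs\<in>?S. tscale (Poly_Mapping.lookup v xs) (G xs))"
    by (simp add: lookup_add tens.scale_left_distrib sum.distrib)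
  also have "\<dots> = tens_extend G u + tens_extend G v"
    using tens_extend_superset[of ?S u G] tens_extend_superset[of ?S v G] by simp
  finally show "tens_extend G (u + v) = tens_extend G u + tens_extend G v" .
next
  fix c and u :: "('b, 'k) tens"
  have "tens_extend G (tscale c u)
      = (\<Sum>xs\<in>Poly_Mapping.keys u. tscale (Poly_Mapping.lookup (tscale c u) xs) (G xs))"
    by (rule tens_extend_superset) (auto simp: in_keys_iff)
  then show "tens_extend G (tscale c u) = tscale c (tens_extend G u)"
    by (simp add: tens_extend_def tens.scale_sum_right)
qed (unfold_locales)

lemma linear_tens_extend_image:
  "tens_linear T \<Longrightarrow> T (tens_extend G u) = tens_extend (\<lambda>xs. T (G xs)) u"
  by (simp add: tens_extend_def tens_pair.linear_sum tens_pair.linear_scale)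

lemma emul_bvec: "emul (bvec b :: ('b, 'k::field) vec) = tens_extend (\<lambda>ys. word (b # ys))"
proof
  fix w :: "('b, 'k) tens"
  have "incl (bvec b :: ('b, 'k) vec) = word [b]"
    by (simp add: incl_def bvec_def)
  then show "emul (bvec b) w = tens_extend (\<lambda>ys. word (b # ys)) w"
    by (simp add: emul_def tprod_def tens_extend_def tscale_word)
qed

lemma linear_emul: "tens_linear (emul (bvec b))"
  by (simp add: emul_bvec linear_tens_extend)

lemma emul_word: "emul (bvec b) (word ys) = word (b # ys)"
  by (simp add: emul_bvec)

lemma contr_eq_tens_extend: "contr f = tens_extend (iword f)"
  by (simp add: fun_eq_iff contr_def tens_extend_def)

lemma linear_contr: "tens_linear (contr f)"
  by (simp add: contr_eq_tens_extend linear_tens_extend)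

lemma contr_word: "contr f (word xs) = iword f xs"
  by (simp add: contr_eq_tens_extend)

lemma linear_LamV: "tens_linear (LamV F (bvec b))"
  unfolding LamV_def contrF_def by (intro tens_pair.linear_compose_add linear_emul linear_contr)

definition Lam_word :: "(('b, 'k::field) vec \<Rightarrow> ('b, 'k) vec \<Rightarrow> 'k) \<Rightarrow> 'b list
                        \<Rightarrow> ('b, 'k) tens \<Rightarrow> ('b, 'k) tens" where
  "Lam_word F xs = foldr (\<lambda>b g. LamV F (bvec b) \<circ> g) xs id"

lemma Lam_word_Nil [simp]: "Lam_word F [] = id"
  by (simp add: Lam_word_def)

lemma Lam_word_Cons: "Lam_word F (b # bs) = LamV F (bvec b) \<circ> Lam_word F bs"
  by (simp add: Lam_word_def)

lemma Lam_eq_tens_extend: "Lam F u w = tens_extend (\<lambda>xs. Lam_word F xs w) u"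
  by (simp add: Lam_def tens_extend_def Lam_word_def)

lemma linear_Lam: "tens_linear (\<lambda>u. Lam F u w)"
  by (simp add: Lam_eq_tens_extend linear_tens_extend)

lemma Lam_of_word: "Lam F (word xs) w = Lam_word F xs w"
  by (simp add: Lam_eq_tens_extend)

lemma contr_emul: "contr f (emul (bvec b) v) = tscale (f (bvec b)) v - emul (bvec b) (contr f v)"
proof -
  have "contr f \<circ> emul (bvec b) = (\<lambda>v. tscale (f (bvec b)) v - (emul (bvec b) \<circ> contr f) v)"
    by (intro tens_linear_eqI tens_linear_compose tens_pair.linear_compose_sub
        tens.linear_scale_self linear_contr linear_emul) (simp add: emul_word contr_word)
  then show ?thesis
    by (simp add: fun_eq_iff)
qed

lemma contr_iword_anticommute: "contr f (iword g xs) + contr g (iword f xs) = 0"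
proof (induction xs)
  case Nil
  show ?case by (simp add: tens_pair.linear_0[OF linear_contr])
next
  case (Cons b bs)
  have "contr f (iword g (b # bs)) + contr g (iword f (b # bs))
      = emul (bvec b) (contr f (iword g bs) + contr g (iword f bs))"
    by (simp add: tens_pair.linear_diff[OF linear_contr] tens_pair.linear_scale[OF linear_contr]
        tens_pair.linear_add[OF linear_emul] contr_word contr_emul algebra_simps)
  with Cons.IH show ?case
    by (simp add: tens_pair.linear_0[OF linear_emul])
qed

lemma contr_anticommute: "contr f (contr g v) = - contr g (contr f v)"
proof -
  have "(\<lambda>v. (contr f \<circ> contr g) v + (contr g \<circ> contr f) v) = (\<lambda>v. 0)"
    by (intro tens_linear_eqI tens_pair.linear_compose_add tens_linear_compose
        tens_pair.linear_zero linear_contr) (simp add: contr_word contr_iword_anticommute)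
  then show ?thesis
    by (simp add: fun_eq_iff eq_neg_iff_add_eq_0)
qed

lemma contr_LamV:
  "contr f (LamV F (bvec b) v) = tscale (f (bvec b)) v - LamV F (bvec b) (contr f v)"
  by (simp add: LamV_def contrF_def tens_pair.linear_add[OF linear_contr]
      tens_pair.linear_add[OF linear_emul] contr_emul contr_anticommute[of f "F (bvec b)"]
      algebra_simps)

lemma Lam_emul: "Lam F (emul (bvec b) v) w = LamV F (bvec b) (Lam F v w)"
proof -
  have "(\<lambda>v. Lam F v w) \<circ> emul (bvec b) = LamV F (bvec b) \<circ> (\<lambda>v. Lam F v w)"
    by (intro tens_linear_eqI tens_linear_compose linear_Lam linear_emul linear_LamV)
      (simp add: emul_word Lam_of_word Lam_word_Cons)
  then show ?thesis
    by (simp add: fun_eq_iff)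
qed

lemma contr_Lam_word:
  "contr f (Lam_word F xs w)
     = Lam F (iword f xs) w + tscale ((-1) ^ length xs) (Lam_word F xs (contr f w))"
proof (induction xs arbitrary: w)
  case Nil
  show ?case by (simp add: Lam_eq_tens_extend tens_extend_def)
next
  case (Cons b bs)
  let ?L = "LamV F (bvec b)"
  have "contr f (Lam_word F (b # bs) w)
      = tscale (f (bvec b)) (Lam_word F bs w) - ?L (contr f (Lam_word F bs w))"
    by (simp add: Lam_word_Cons contr_LamV)
  also have "\<dots> = tscale (f (bvec b)) (Lam_word F bs w) - ?L (Lam F (iword f bs) w)
                   - tscale ((-1) ^ length bs) (Lam_word F (b # bs) (contr f w))"
    by (simp add: Cons.IH tens_pair.linear_add[OF linear_LamV] tens_pair.linear_scale[OF linear_LamV]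
        Lam_word_Cons)
  also have "\<dots> = Lam F (iword f (b # bs)) w
                   + tscale ((-1) ^ length (b # bs)) (Lam_word F (b # bs) (contr f w))"
    by (simp add: tens_pair.linear_diff[OF linear_Lam] tens_pair.linear_scale[OF linear_Lam]
        Lam_of_word Lam_emul)
  finally show ?case .
qed

text \<open>Only the values of \<open>f\<close> and \<open>F\<close> on basis vectors enter \<^const>\<open>contr\<close> and
  \<^const>\<open>Lam\<close>.\<close>

theorem mainTheorem1:
  fixes F :: "('b, 'k::field) vec \<Rightarrow> ('b, 'k) vec \<Rightarrow> 'k"
    and f :: "('b, 'k) vec \<Rightarrow> 'k"
    and p :: nat
    and u :: "('b, 'k) tens"
  assumes "bilin_form F"
    and "lin_form f"
    and "homog p u"
  shows "contr f \<circ> Lam F u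
           = (\<lambda>w. Lam F (contr f u) w + tscale ((-1) ^ p) ((Lam F u \<circ> contr f) w))"
proof
  fix w
  have "(contr f \<circ> Lam F u) w = tens_extend (\<lambda>xs. contr f (Lam_word F xs w)) u"
    by (simp add: Lam_eq_tens_extend linear_tens_extend_image[OF linear_contr])
  also have "\<dots> = tens_extend (\<lambda>xs. Lam F (iword f xs) w
                              + tscale ((-1) ^ p) (Lam_word F xs (contr f w))) u"
    using assms(3) by (intro tens_extend_cong) (simp add: homog_def contr_Lam_word)
  also have "\<dots> = tens_extend (\<lambda>xs. Lam F (iword f xs) w) u
                 + tscale ((-1) ^ p) (tens_extend (\<lambda>xs. Lam_word F xs (contr f w)) u)"
    by (simp add: tens_extend_def tens.scale_right_distrib sum.distrib tens.scale_sum_right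
        mult.commute)
  also have "tens_extend (\<lambda>xs. Lam F (iword f xs) w) u = Lam F (contr f u) w"
    by (simp add: contr_eq_tens_extend linear_tens_extend_image[OF linear_Lam])
  finally show "(contr f \<circ> Lam F u) w
      = Lam F (contr f u) w + tscale ((-1) ^ p) ((Lam F u \<circ> contr f) w)"
    by (simp add: Lam_eq_tens_extend)
qed

end
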